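(* Let $G$ be an amenable group and let $A,B\subseteq G$ have positive Banach densities $d(A)=\alpha$ and $d(B)=\beta$. Then the product set $AB$ is piecewise $k$-syndetic with $k=\left\lfloor\frac{1}{\alpha\beta}\right\rfloor$; that is, there is $F\subseteq G$ with $|F|\le\frac1{\alpha\beta}$ such that $FAB$ is thick.
   Context: A finite $K\subseteq G$ is $(H,\varepsilon)$-invariant if $K\ne\emptyset$ and $|hK\triangle K|/|K|<\varepsilon$ for all $h\in H$; $G$ is amenable if such $K$ exist for every finite $H\subseteq G$ and $\varepsilon>0$. $d(A)$ is the supremum of all $\alpha$ such that for every finite $H$ and $\varepsilon>0$ there is an $(H,\varepsilon)$-invariant $K$ with $|A\cap K|/|K|\ge\alpha$. A set $T\subseteq G$ is thick if for every finite $H\subseteq G$ there is $x\in G$ with $Hx\subseteq T$. $S$ is piecewise $k$-syndetic if $FS$ is thick for some $F\subseteq G$ with $|F|\le k$. *)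

theory Defs
  imports Complex_Main
begin

text \<open>The group G is modelled as a type of class group_add (not necessarily
commutative); the group operation is written +.\<close>

definition lmul :: "'a::group_add set \<Rightarrow> 'a set \<Rightarrow> 'a set" where
  "lmul X Y = {x + y | x y. x \<in> X \<and> y \<in> Y}"

definition sym_diff :: "'a set \<Rightarrow> 'a set \<Rightarrow> 'a set" where
  "sym_diff X Y = (X - Y) \<union> (Y - X)"

definition invariant :: "'a::group_add set \<Rightarrow> real \<Rightarrow> 'a set \<Rightarrow> bool" where
  "invariant H \<epsilon> K \<longleftrightarrow> finite K \<and> K \<noteq> {} \<and>
     (\<forall>h\<in>H. real (card (sym_diff ((\<lambda>k. h + k) ` K) K)) / real (card K) < \<epsilon>)"

definition amenable :: "'a::group_add itself \<Rightarrow> bool" where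
  "amenable (_::'a itself) \<longleftrightarrow>
     (\<forall>H::'a set. finite H \<longrightarrow> (\<forall>\<epsilon>>0. \<exists>K. invariant H \<epsilon> K))"

definition banach_density :: "'a::group_add set \<Rightarrow> real" where
  "banach_density A = Sup {\<alpha>. \<forall>H. finite H \<longrightarrow> (\<forall>\<epsilon>>0. \<exists>K. invariant H \<epsilon> K \<and>
       real (card (A \<inter> K)) / real (card K) \<ge> \<alpha>)}"

definition thick :: "'a::group_add set \<Rightarrow> bool" where
  "thick T \<longleftrightarrow> (\<forall>H. finite H \<longrightarrow> (\<exists>x. (\<lambda>h. h + x) ` H \<subseteq> T))"

definition piecewise_syndetic :: "nat \<Rightarrow> 'a::group_add set \<Rightarrow> bool" where
  "piecewise_syndetic k S \<longleftrightarrow> (\<exists>F. finite F \<and> card F \<le> k \<and> thick (lmul F S))"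

end

theory Submission
  imports Defs
begin

(* For x in G the fibre E_x = {e \<in> A. -e + x \<in> B} satisfies
   f + E_x \<subseteq> f + A + B.  A double-counting argument shows that for every
   finite H and \<eta> > 0 some fibre has density at least \<alpha>\<beta> - \<eta> in some
   (H,\<eta>)-invariant set K.  Call a finite F a packing set if for all H and \<eta>
   such a dense fibre can be chosen with pairwise disjoint translates f + E_x
   (f \<in> F).  Disjointness and invariance give |F| \<alpha>\<beta> \<le> 1, and {0} is a
   packing set, so some packing set F cannot be enlarged.  Given a finite H0,
   the finitely many obstructions to enlarging F by the points h \<in> H0 - F are
   met by one dense fibre E_x with disjoint F-translates; then each h + E_x
   meets some f + E_x, which puts h + x into F + A + B.  So F + A + B is thick. *)

lemma invariant_mono:
  "invariant H' \<epsilon>' K \<Longrightarrow> H \<subseteq> H' \<Longrightarrow> \<epsilon>' \<le> \<epsilon> \<Longrightarrow> invariant H \<epsilon> K"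
  unfolding invariant_def by (meson less_le_trans subsetD)

lemma invariant_card_pos: "invariant H \<epsilon> K \<Longrightarrow> finite K \<and> card K > 0"
  unfolding invariant_def by (simp add: card_gt_0_iff)

lemma invariant_translate_out:
  assumes "invariant H \<epsilon> K" "h \<in> H"
  shows "real (card ((+) h ` K - K)) < \<epsilon> * real (card K)"
proof -
  have K: "finite K" "card K > 0" using assms(1) invariant_card_pos by blast+
  have "real (card (sym_diff ((+) h ` K) K)) / real (card K) < \<epsilon>"
    using assms unfolding invariant_def by blast
  then have "real (card (sym_diff ((+) h ` K) K)) < \<epsilon> * real (card K)"
    using K by (simp add: divide_less_eq)
  moreover have "card ((+) h ` K - K) \<le> card (sym_diff ((+) h ` K) K)"
    by (rule card_mono) (auto simp: sym_diff_def K)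
  ultimately show ?thesis by linarith
qed

lemma invariant_translate_density:
  assumes "invariant H \<epsilon> K" "h \<in> H"
  shows "real (card (E \<inter> K)) < real (card ((+) h ` E \<inter> K)) + \<epsilon> * real (card K)"
proof -
  have K: "finite K" using assms(1) invariant_card_pos by blast
  have "card ((+) h ` (E \<inter> K)) \<le> card (((+) h ` E \<inter> K) \<union> ((+) h ` K - K))"
    using K by (intro card_mono) auto
  also have "\<dots> \<le> card ((+) h ` E \<inter> K) + card ((+) h ` K - K)"
    by (rule card_Un_le)
  finally have "card (E \<inter> K) \<le> card ((+) h ` E \<inter> K) + card ((+) h ` K - K)"
    by (simp add: card_image)
  with invariant_translate_out[OF assms] show ?thesis by linarith
qed

lemma banach_density_approx:
  fixes A :: "'a::group_add set"
  assumes am: "amenable TYPE('a)" and "finite H" "\<epsilon> > 0" "\<delta> > 0"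
  shows "\<exists>K. invariant H \<epsilon> K \<and> (banach_density A - \<delta>) * real (card K) \<le> real (card (A \<inter> K))"
proof -
  define S where "S = {\<alpha>. \<forall>H. finite H \<longrightarrow> (\<forall>\<epsilon>>0. \<exists>K. invariant H \<epsilon> K \<and>
       real (card (A \<inter> K)) / real (card K) \<ge> \<alpha>)}"
  have "0 \<in> S" using am unfolding S_def amenable_def by auto
  moreover have "banach_density A - \<delta> < Sup S"
    using \<open>\<delta> > 0\<close> unfolding banach_density_def S_def by simp
  ultimately obtain \<gamma> where "\<gamma> \<in> S" and \<gamma>: "banach_density A - \<delta> < \<gamma>"
    using less_cSupE by blast
  then obtain K where K: "invariant H \<epsilon> K" "\<gamma> \<le> real (card (A \<inter> K)) / real (card K)"
    using assms unfolding S_def by blast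
  have "card K > 0" using K(1) invariant_card_pos by blast
  then have "\<gamma> * real (card K) \<le> real (card (A \<inter> K))" using K(2) by (simp add: le_divide_eq)
  moreover have "(banach_density A - \<delta>) * real (card K) \<le> \<gamma> * real (card K)"
    using \<gamma> by (intro mult_right_mono) auto
  ultimately show ?thesis using K(1) by fastforce
qed

lemma banach_density_le_1:
  fixes A :: "'a::group_add set"
  assumes am: "amenable TYPE('a)"
  shows "banach_density A \<le> 1"
proof (rule ccontr)
  define \<delta> where "\<delta> = (banach_density A - 1) / 2"
  assume "\<not> banach_density A \<le> 1"
  then have "\<delta> > 0" and "banach_density A - \<delta> > 1" by (auto simp: \<delta>_def field_simps)
  then obtain K where K: "invariant {} 1 K"
      "(banach_density A - \<delta>) * real (card K) \<le> real (card (A \<inter> K))"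
    using banach_density_approx[OF am, of "{}" 1 \<delta> A] by auto
  have "finite K" "card K > 0" using K(1) invariant_card_pos by blast+
  then have "card (A \<inter> K) \<le> card K" by (intro card_mono) auto
  moreover have "real (card K) < (banach_density A - \<delta>) * real (card K)"
    using \<open>card K > 0\<close> \<open>banach_density A - \<delta> > 1\<close> by simp
  ultimately show False using K(2) by linarith
qed

section \<open>Fibres and the averaging lemma\<close>

text \<open>The fibre of x: all e \<in> A with -e + x \<in> B, i.e. all ways of writing x \<in> A + B.\<close>

definition fibre :: "'a::group_add set \<Rightarrow> 'a set \<Rightarrow> 'a \<Rightarrow> 'a set" where
  "fibre A B x = {e \<in> A. -e + x \<in> B}"

lemma mem_translate_iff: "x \<in> (+) e ` B \<longleftrightarrow> -e + x \<in> (B :: 'a::group_add set)"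
  by (auto simp: image_iff add.assoc[symmetric] intro: bexI[of _ "-e + x"])

lemma fibre_double_count:
  assumes "finite K" "finite L"
  shows "(\<Sum>x\<in>L. real (card (fibre A B x \<inter> K))) = (\<Sum>e\<in>A \<inter> K. real (card ((+) e ` B \<inter> L)))"
proof -
  have "(\<Sum>x\<in>L. real (card (fibre A B x \<inter> K))) = (\<Sum>x\<in>L. \<Sum>e\<in>A \<inter> K. of_bool (-e + x \<in> B))"
  proof (rule sum.cong[OF refl])
    fix x
    have "fibre A B x \<inter> K = (A \<inter> K) \<inter> {e. -e + x \<in> B}" by (auto simp: fibre_def)
    then show "real (card (fibre A B x \<inter> K)) = (\<Sum>e\<in>A \<inter> K. of_bool (-e + x \<in> B))"
      using assms by simp
  qed
  also have "\<dots> = (\<Sum>e\<in>A \<inter> K. \<Sum>x\<in>L. of_bool (-e + x \<in> B))" by (rule sum.swap)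
  also have "\<dots> = (\<Sum>e\<in>A \<inter> K. real (card ((+) e ` B \<inter> L)))"
    using assms by (simp add: mem_translate_iff Int_def conj_commute)
  finally show ?thesis .
qed

lemma product_error_bound:
  fixes \<alpha> \<beta> t \<eta> :: real
  assumes "\<alpha> \<le> 1" "\<beta> \<le> 1" "t > 0" "3 * t \<le> \<eta>"
  shows "\<alpha> * \<beta> - \<eta> \<le> (\<alpha> - t) * (\<beta> - 2*t)"
proof -
  have "(\<alpha> - t) * (\<beta> - 2*t) = \<alpha>*\<beta> - 2*\<alpha>*t - \<beta>*t + 2*t*t" by (simp add: algebra_simps)
  moreover have "2*\<alpha>*t \<le> 2*t" "\<beta>*t \<le> t" "0 \<le> t*t" using assms by auto
  ultimately show ?thesis using assms(4) by linarith
qed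

lemma exists_above_average:
  fixes f :: "'b \<Rightarrow> real"
  assumes "finite L" "L \<noteq> {}" "real (card L) * m \<le> (\<Sum>x\<in>L. f x)"
  shows "\<exists>x\<in>L. m \<le> f x"
proof (rule ccontr)
  assume "\<not> ?thesis"
  then have "(\<Sum>x\<in>L. f x) < (\<Sum>x\<in>L. m)"
    using assms(1,2) by (intro sum_strict_mono) (auto simp: not_le)
  with assms(3) show False by simp
qed

text \<open>Take K almost invariant with A dense in K, then L almost invariant under K
  with B dense in L; each e + B (e \<in> A \<inter> K) is dense in L, and averaging the
  double count over x \<in> L yields a good fibre.\<close>

lemma large_fibre:
  fixes A B :: "'a::group_add set"
  assumes am: "amenable TYPE('a)" and ab: "banach_density A > 0" "banach_density B > 0"
    and "\<eta> > 0" "finite H"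
  shows "\<exists>x K. invariant H \<eta> K \<and>
           (banach_density A * banach_density B - \<eta>) * real (card K) \<le> real (card (fibre A B x \<inter> K))"
proof -
  define \<alpha> \<beta> where "\<alpha> = banach_density A" and "\<beta> = banach_density B"
  define t where "t = min (\<eta>/3) (\<beta>/4)"
  have t: "t > 0" "3 * t \<le> \<eta>" "2 * t \<le> \<beta>" using ab \<open>\<eta> > 0\<close> by (auto simp: t_def \<beta>_def)
  obtain K where K: "invariant H t K" "(\<alpha> - t) * real (card K) \<le> real (card (A \<inter> K))"
    using banach_density_approx[OF am \<open>finite H\<close> t(1) t(1)] unfolding \<alpha>_def by blast
  have Kp: "finite K" using K(1) invariant_card_pos by blast
  obtain L where L: "invariant K t L" "(\<beta> - t) * real (card L) \<le> real (card (B \<inter> L))"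
    using banach_density_approx[OF am Kp t(1) t(1)] unfolding \<beta>_def by blast
  have Lp: "finite L" "card L > 0" using L(1) invariant_card_pos by blast+
  have each: "(\<beta> - 2*t) * real (card L) \<le> real (card ((+) e ` B \<inter> L))" if "e \<in> A \<inter> K" for e
    using invariant_translate_density[OF L(1), of e B] L(2) that by (simp add: Int_commute algebra_simps)
  have "real (card (A \<inter> K)) * ((\<beta> - 2*t) * real (card L)) \<le> (\<Sum>x\<in>L. real (card (fibre A B x \<inter> K)))"
    using sum_mono[OF each, of "A \<inter> K"] fibre_double_count[OF Kp Lp(1), of A B] by simp
  moreover have "((\<alpha> - t) * real (card K)) * ((\<beta> - 2*t) * real (card L))
                   \<le> real (card (A \<inter> K)) * ((\<beta> - 2*t) * real (card L))"
    using K(2) t by (intro mult_right_mono) auto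
  moreover have "\<alpha> * \<beta> - \<eta> \<le> (\<alpha> - t) * (\<beta> - 2*t)"
    using banach_density_le_1[OF am] t by (intro product_error_bound) (auto simp: \<alpha>_def \<beta>_def)
  then have "((\<alpha>*\<beta> - \<eta>) * real (card K)) * real (card L)
               \<le> ((\<alpha> - t) * real (card K)) * ((\<beta> - 2*t) * real (card L))"
    using mult_right_mono[of "\<alpha> * \<beta> - \<eta>" "(\<alpha> - t) * (\<beta> - 2*t)" "real (card K) * real (card L)"]
    by (simp add: algebra_simps)
  ultimately have avg: "real (card L) * ((\<alpha>*\<beta> - \<eta>) * real (card K))
                          \<le> (\<Sum>x\<in>L. real (card (fibre A B x \<inter> K)))"
    by (simp add: algebra_simps)
  then have "\<exists>x\<in>L. (\<alpha>*\<beta> - \<eta>) * real (card K) \<le> real (card (fibre A B x \<inter> K))"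
    using Lp by (intro exists_above_average) auto
  moreover have "invariant H \<eta> K" using invariant_mono[OF K(1)] t by auto
  ultimately show ?thesis unfolding \<alpha>_def \<beta>_def by blast
qed

section \<open>Packing sets\<close>

definition disjoint_translates :: "'a::group_add set \<Rightarrow> 'a set \<Rightarrow> bool" where
  "disjoint_translates F E \<longleftrightarrow> (\<forall>f\<in>F. \<forall>g\<in>F. f \<noteq> g \<longrightarrow> (+) f ` E \<inter> (+) g ` E = {})"

definition dense_fibre :: "'a::group_add set \<Rightarrow> 'a set \<Rightarrow> real \<Rightarrow> 'a set \<Rightarrow> real \<Rightarrow> 'a \<Rightarrow> 'a set \<Rightarrow> bool" where
  "dense_fibre A B c H \<eta> x K \<longleftrightarrow>
     invariant H \<eta> K \<and> (c - \<eta>) * real (card K) \<le> real (card (fibre A B x \<inter> K))"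

definition packing :: "'a::group_add set \<Rightarrow> 'a set \<Rightarrow> real \<Rightarrow> 'a set \<Rightarrow> bool" where
  "packing A B c F \<longleftrightarrow> (\<forall>\<eta>>0. \<forall>H. finite H \<longrightarrow>
     (\<exists>x K. dense_fibre A B c H \<eta> x K \<and> disjoint_translates F (fibre A B x)))"

lemma dense_fibre_mono:
  "dense_fibre A B c H' \<eta>' x K \<Longrightarrow> H \<subseteq> H' \<Longrightarrow> \<eta>' \<le> \<eta> \<Longrightarrow> dense_fibre A B c H \<eta> x K"
  unfolding dense_fibre_def using invariant_mono
  by (meson diff_left_mono mult_right_mono of_nat_0_le_iff order_trans)

lemma packing_singleton:
  fixes A B :: "'a::group_add set"
  assumes "amenable TYPE('a)" "banach_density A > 0" "banach_density B > 0"
  shows "packing A B (banach_density A * banach_density B) {0}"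
  using large_fibre[OF assms]
  unfolding packing_def dense_fibre_def disjoint_translates_def by blast

lemma disjoint_translates_count:
  assumes "disjoint_translates F E" "finite F" "invariant F \<epsilon> K"
  shows "real (card F) * (real (card (E \<inter> K)) - \<epsilon> * real (card K)) \<le> real (card K)"
proof -
  have K: "finite K" using assms(3) invariant_card_pos by blast
  have "real (card (E \<inter> K)) - \<epsilon> * real (card K) \<le> real (card ((+) f ` E \<inter> K))"
    if "f \<in> F" for f
    using invariant_translate_density[OF assms(3) that, of E] by linarith
  then have "real (card F) * (real (card (E \<inter> K)) - \<epsilon> * real (card K))
               \<le> (\<Sum>f\<in>F. real (card ((+) f ` E \<inter> K)))"
    using sum_mono[of F "\<lambda>_. real (card (E \<inter> K)) - \<epsilon> * real (card K)"] by simp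
  also have "\<dots> = real (card (\<Union>f\<in>F. (+) f ` E \<inter> K))"
    using assms(1,2) K unfolding disjoint_translates_def
    by (subst card_UN_disjoint) auto
  also have "\<dots> \<le> real (card K)" using K by (intro of_nat_mono card_mono) auto
  finally show ?thesis .
qed

lemma packing_card_bound:
  assumes "packing A B c F" "finite F"
  shows "real (card F) * c \<le> 1"
proof (rule ccontr)
  define n where "n = real (card F)"
  assume "\<not> real (card F) * c \<le> 1"
  then have nc: "n * c > 1" and n: "n > 0" unfolding n_def by (auto intro: gr0I)
  define \<eta> where "\<eta> = (n*c - 1) / (4*n)"
  have "\<eta> > 0" using nc n by (simp add: \<eta>_def)
  then obtain x K where K: "invariant F \<eta> K"
      "(c - \<eta>) * real (card K) \<le> real (card (fibre A B x \<inter> K))"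
      "disjoint_translates F (fibre A B x)"
    using assms unfolding packing_def dense_fibre_def by blast
  have "card K > 0" using K(1) invariant_card_pos by blast
  have "(c - 2*\<eta>) * real (card K) \<le> real (card (fibre A B x \<inter> K)) - \<eta> * real (card K)"
    using K(2) by (simp add: algebra_simps)
  then have "n * ((c - 2*\<eta>) * real (card K)) \<le> n * (real (card (fibre A B x \<inter> K)) - \<eta> * real (card K))"
    using n by (intro mult_left_mono) auto
  also have "\<dots> \<le> real (card K)"
    using disjoint_translates_count[OF K(3) assms(2) K(1)] unfolding n_def .
  finally have "n * ((c - 2*\<eta>) * real (card K)) \<le> real (card K)" .
  moreover have "n * (c - 2*\<eta>) = (n*c + 1) / 2" using n by (simp add: \<eta>_def field_simps)
  ultimately have "(n*c + 1) / 2 * real (card K) \<le> 1 * real (card K)"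
    by (simp add: mult.assoc[symmetric])
  then have "(n*c + 1) / 2 \<le> 1" using \<open>card K > 0\<close> by (simp only: mult_le_cancel_right)
  with nc show False by simp
qed

section \<open>Maximal packing sets are thick after multiplication\<close>

lemma exists_maximal_finite_set:
  assumes "P X\<^sub>0" "finite X\<^sub>0" and bounded: "\<And>X. P X \<Longrightarrow> finite X \<Longrightarrow> card X \<le> n"
  shows "\<exists>X. P X \<and> finite X \<and> (\<forall>y. y \<notin> X \<longrightarrow> \<not> P (insert y X))"
proof -
  define Fam where "Fam = {X. P X \<and> finite X}"
  have "card ` Fam \<subseteq> {..n}" using bounded unfolding Fam_def by blast
  then have fin: "finite (card ` Fam)" by (rule finite_subset) simp
  have "card ` Fam \<noteq> {}" using assms(1,2) unfolding Fam_def by blast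
  then obtain X where X: "X \<in> Fam" "card X = Max (card ` Fam)"
    using Max_in[OF fin] by fastforce
  have "\<not> P (insert y X)" if "y \<notin> X" for y
  proof
    assume "P (insert y X)"
    then have "card (insert y X) \<le> Max (card ` Fam)"
      using X(1) fin unfolding Fam_def by auto
    with X that show False unfolding Fam_def by simp
  qed
  with X(1) show ?thesis unfolding Fam_def by blast
qed

lemma packing_insert_obstruction:
  assumes "finite S" "\<forall>h\<in>S. \<not> packing A B c (insert h F)"
  shows "\<exists>\<eta>>0. \<exists>H. finite H \<and> (\<forall>x K. dense_fibre A B c H \<eta> x K \<longrightarrow>
           (\<forall>h\<in>S. \<not> disjoint_translates (insert h F) (fibre A B x)))"
  using assms
proof (induction S rule: finite_induct)
  case empty
  show ?case by (rule exI[of _ 1]) auto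
next
  case (insert h S)
  then obtain \<eta>\<^sub>1 H\<^sub>1 where 1: "\<eta>\<^sub>1 > 0" "finite H\<^sub>1"
      "\<forall>x K. dense_fibre A B c H\<^sub>1 \<eta>\<^sub>1 x K \<longrightarrow> (\<forall>h\<in>S. \<not> disjoint_translates (insert h F) (fibre A B x))"
    by auto
  from insert.prems obtain \<eta>\<^sub>2 H\<^sub>2 where 2: "\<eta>\<^sub>2 > 0" "finite H\<^sub>2"
      "\<forall>x K. dense_fibre A B c H\<^sub>2 \<eta>\<^sub>2 x K \<longrightarrow> \<not> disjoint_translates (insert h F) (fibre A B x)"
    unfolding packing_def by blast
  have both: "dense_fibre A B c H\<^sub>1 \<eta>\<^sub>1 x K \<and> dense_fibre A B c H\<^sub>2 \<eta>\<^sub>2 x K"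
    if "dense_fibre A B c (H\<^sub>1 \<union> H\<^sub>2) (min \<eta>\<^sub>1 \<eta>\<^sub>2) x K" for x K
    using dense_fibre_mono[OF that] by simp
  show ?case
  proof (rule exI[of _ "min \<eta>\<^sub>1 \<eta>\<^sub>2"], intro conjI exI[of _ "H\<^sub>1 \<union> H\<^sub>2"] allI impI)
    show "min \<eta>\<^sub>1 \<eta>\<^sub>2 > 0" "finite (H\<^sub>1 \<union> H\<^sub>2)" using 1 2 by simp_all
    fix x K
    assume "dense_fibre A B c (H\<^sub>1 \<union> H\<^sub>2) (min \<eta>\<^sub>1 \<eta>\<^sub>2) x K"
    with both 1(3) 2(3) show "\<forall>h'\<in>insert h S. \<not> disjoint_translates (insert h' F) (fibre A B x)"
      by blast
  qed
qed

lemma translate_collision: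
  assumes "disjoint_translates F E" "\<not> disjoint_translates (insert h F) E"
  shows "\<exists>f\<in>F. \<exists>e\<in>E. \<exists>e'\<in>E. h + e' = f + e"
proof -
  obtain f g where fg: "f \<in> insert h F" "g \<in> insert h F" "f \<noteq> g"
      and meet: "(+) f ` E \<inter> (+) g ` E \<noteq> {}"
    using assms(2) unfolding disjoint_translates_def by blast
  then have "(f = h \<and> g \<in> F) \<or> (g = h \<and> f \<in> F)"
    using assms(1) unfolding disjoint_translates_def by blast
  moreover obtain e\<^sub>1 e\<^sub>2 where "e\<^sub>1 \<in> E" "e\<^sub>2 \<in> E" "f + e\<^sub>1 = g + e\<^sub>2"
    using meet by blast
  ultimately show ?thesis by metis
qed

lemma collision_in_product:
  assumes "f \<in> F" "e \<in> fibre A B x" "e' \<in> fibre A B x" "h + e' = f + e"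
  shows "h + x \<in> lmul F (lmul A B)"
proof -
  have "e \<in> A" "-e' + x \<in> B" using assms(2,3) by (auto simp: fibre_def)
  then have "e + (-e' + x) \<in> lmul A B" unfolding lmul_def by blast
  moreover have "h + x = f + (e + (-e' + x))"
    using assms(4) by (metis add.assoc add_minus_cancel)
  ultimately show ?thesis using assms(1) unfolding lmul_def by blast
qed

lemma maximal_packing_thick:
  assumes "packing A B c F" "c > 0" and maximal: "\<And>h. h \<notin> F \<Longrightarrow> \<not> packing A B c (insert h F)"
  shows "thick (lmul F (lmul A B))"
  unfolding thick_def
proof (intro allI impI)
  fix H\<^sub>0 :: "'a set"
  assume "finite H\<^sub>0"
  then obtain \<eta> H where \<eta>: "\<eta> > 0" "finite H" and obstruction:
      "\<And>x K. dense_fibre A B c H \<eta> x K \<Longrightarrow> \<forall>h\<in>H\<^sub>0 - F. \<not> disjoint_translates (insert h F) (fibre A B x)"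
    using packing_insert_obstruction[of "H\<^sub>0 - F" A B c F] maximal by blast
  have "min \<eta> (c/2) > 0" using \<eta>(1) assms(2) by simp
  then obtain x K where K: "dense_fibre A B c H (min \<eta> (c/2)) x K" "disjoint_translates F (fibre A B x)"
    using assms(1) \<eta>(2) unfolding packing_def by blast
  have "fibre A B x \<noteq> {}"
  proof -
    have "card K > 0" using K(1) invariant_card_pos unfolding dense_fibre_def by blast
    then have "0 < (c - min \<eta> (c/2)) * real (card K)" using assms(2) by simp
    also have "\<dots> \<le> real (card (fibre A B x \<inter> K))" using K(1) unfolding dense_fibre_def by blast
    finally show ?thesis by auto
  qed
  have "h + x \<in> lmul F (lmul A B)" if "h \<in> H\<^sub>0" for h
  proof (cases "h \<in> F")
    case True
    with \<open>fibre A B x \<noteq> {}\<close> show ?thesis using collision_in_product[of h F] by blast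
  next
    case False
    have "dense_fibre A B c H \<eta> x K" using dense_fibre_mono[OF K(1)] by simp
    with obstruction that False have "\<not> disjoint_translates (insert h F) (fibre A B x)" by blast
    then obtain f e e' where "f \<in> F" "e \<in> fibre A B x" "e' \<in> fibre A B x" "h + e' = f + e"
      using translate_collision[OF K(2)] by blast
    then show ?thesis by (rule collision_in_product)
  qed
  then show "\<exists>x. (\<lambda>h. h + x) ` H\<^sub>0 \<subseteq> lmul F (lmul A B)" by blast
qed

theorem mainTheorem13:
  fixes A B :: "'a::group_add set" and \<alpha> \<beta> :: real
  assumes "amenable TYPE('a)"
    and "banach_density A = \<alpha>" and "banach_density B = \<beta>"
    and "\<alpha> > 0" and "\<beta> > 0"
  shows "piecewise_syndetic (nat \<lfloor>1 / (\<alpha> * \<beta>)\<rfloor>) (lmul A B)"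
proof -
  define c where "c = \<alpha> * \<beta>"
  have "c > 0" using assms by (simp add: c_def)
  have bound: "card F \<le> nat \<lfloor>1 / c\<rfloor>" if "packing A B c F" "finite F" for F
  proof (rule le_nat_floor)
    show "real (card F) \<le> 1 / c"
      using packing_card_bound[OF that] \<open>c > 0\<close> by (simp add: le_divide_eq)
  qed
  have "packing A B c {0}" using packing_singleton[OF assms(1), of A B] assms(2-5) unfolding c_def by simp
  then obtain F where F: "packing A B c F" "finite F"
      and maximal: "\<And>h. h \<notin> F \<Longrightarrow> \<not> packing A B c (insert h F)"
    using exists_maximal_finite_set[where P = "packing A B c", OF _ _ bound] by auto
  have "thick (lmul F (lmul A B))" using maximal_packing_thick[OF F(1) \<open>c > 0\<close> maximal] .
  with F bound[OF F] show ?thesis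
    unfolding piecewise_syndetic_def c_def by blast
qed

end
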